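(* Let $\nu$ be a modulus of variation and $1\le p<\infty$. If $f\in V_p[\nu]$ is $2\pi$-periodic, then there is a constant $C$ (depending on $f$) such that its Fourier coefficients satisfy $|\hat f(n)|\le C\,\nu(n)/n^{1/p}$ for all $n\ge1$.
   Context: A modulus of variation is a nondecreasing concave sequence of positive numbers $\nu(1),\nu(2),\dots$. For $f$ and $n\ge1$, $\upsilon_p(n,f)=\sup(\sum_{j=1}^n|f(I_j)|^p)^{1/p}$ over $n$ nonoverlapping subintervals $I_j$ of $[0,2\pi]$, $f(I)=f(\sup I)-f(\inf I)$; $V_p[\nu]$ is the class of bounded $2\pi$-periodic $f$ with $\upsilon_p(n,f)\le C\nu(n)$ for all $n$ and some $C$. *)

theory Defs
  imports "HOL-Analysis.Analysis"
begin

definition modulus_of_variation :: "(nat \<Rightarrow> real) \<Rightarrow> bool" where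
  "modulus_of_variation \<nu> \<longleftrightarrow>
     (\<forall>n\<ge>1. 0 < \<nu> n) \<and>
     (\<forall>n\<ge>1. \<nu> n \<le> \<nu> (n + 1)) \<and>
     (\<forall>n\<ge>2. \<nu> (n - 1) + \<nu> (n + 1) \<le> 2 * \<nu> n)"

definition nonoverlapping_subintervals :: "nat \<Rightarrow> (nat \<Rightarrow> real) \<Rightarrow> (nat \<Rightarrow> real) \<Rightarrow> bool" where
  "nonoverlapping_subintervals n a b \<longleftrightarrow>
     (\<forall>j<n. 0 \<le> a j \<and> a j \<le> b j \<and> b j \<le> 2 * pi) \<and>
     (\<forall>i<n. \<forall>j<n. i \<noteq> j \<longrightarrow> b i \<le> a j \<or> b j \<le> a i)"

definition upsilon :: "real \<Rightarrow> nat \<Rightarrow> (real \<Rightarrow> complex) \<Rightarrow> ereal" where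
  "upsilon p n f = (SUP (a, b) \<in> {(a, b). nonoverlapping_subintervals n a b}.
       ereal ((\<Sum>j<n. cmod (f (b j) - f (a j)) powr p) powr (1 / p)))"

definition Vp_class :: "real \<Rightarrow> (nat \<Rightarrow> real) \<Rightarrow> (real \<Rightarrow> complex) set" where
  "Vp_class p \<nu> = {f. bounded (range f) \<and> (\<forall>x. f (x + 2 * pi) = f x) \<and>
       (\<exists>C. \<forall>n\<ge>1. upsilon p n f \<le> ereal (C * \<nu> n))}"

definition fourier_coeff :: "(real \<Rightarrow> complex) \<Rightarrow> int \<Rightarrow> complex" where
  "fourier_coeff f n = complex_of_real (1 / (2 * pi)) *
     (LINT x:{0..2 * pi}|lborel. f x * exp (- \<i> * of_int n * complex_of_real x))"

end

theory Submission
  imports Defs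
begin

text \<open>Since exp(-inx) changes sign under x |-> x + pi/n, cutting [0, 2pi] into 2n intervals
  of length h = pi/n gives
  2pi f^(n) = integral over t in [0,h] of exp(-int) * sum_{j<n} (f(t + 2jh) - f(t + (2j+1)h)).
  For each t the intervals [t + 2jh, t + (2j+1)h], j < n, do not overlap, so by Hoelder's
  inequality the inner sum is at most n^(1-1/p) upsilon_p(n,f) <= C n^(1-1/p) nu(n), and
  integrating over [0,h] yields |f^(n)| <= C nu(n) / (2 n^(1/p)).\<close>

lemma sum_le_card_powr_mult_sum_powr_pos:
  fixes d :: "'a \<Rightarrow> real"
  assumes "finite J" "J \<noteq> {}" "1 \<le> p" "\<And>j. j \<in> J \<Longrightarrow> 0 < d j"
  shows "(\<Sum>j\<in>J. d j) \<le> real (card J) powr (1 - 1/p) * (\<Sum>j\<in>J. d j powr p) powr (1/p)"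
proof -
  define m where "m = real (card J)"
  have m: "0 < m"
    using assms(1,2) by (simp add: m_def card_gt_0_iff)
  have "(\<Sum>j\<in>J. (1/m) *\<^sub>R d j) powr p \<le> (\<Sum>j\<in>J. (1/m) * d j powr p)"
    using m assms by (intro convex_on_sum[OF assms(1,2) powr_convex[OF assms(3)]]) (auto simp: m_def)
  then have "((\<Sum>j\<in>J. d j) / m) powr p \<le> (\<Sum>j\<in>J. d j powr p) / m"
    by (simp add: sum_distrib_left[symmetric] sum_divide_distrib[symmetric])
  then have "(((\<Sum>j\<in>J. d j) / m) powr p) powr (1/p) \<le> ((\<Sum>j\<in>J. d j powr p) / m) powr (1/p)"
    using assms(3) by (intro powr_mono2) auto
  then have "(\<Sum>j\<in>J. d j) / m \<le> (\<Sum>j\<in>J. d j powr p) powr (1/p) / m powr (1/p)"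
    using assms(3,4) m by (simp add: powr_powr sum_nonneg less_imp_le powr_divide)
  then have "(\<Sum>j\<in>J. d j) \<le> m / m powr (1/p) * (\<Sum>j\<in>J. d j powr p) powr (1/p)"
    using m by (simp add: field_simps)
  then show ?thesis
    using m by (simp add: m_def powr_diff)
qed

lemma sum_le_card_powr_mult_sum_powr:
  fixes d :: "'a \<Rightarrow> real"
  assumes "finite J" "1 \<le> p" "\<And>j. j \<in> J \<Longrightarrow> 0 \<le> d j"
  shows "(\<Sum>j\<in>J. d j) \<le> real (card J) powr (1 - 1/p) * (\<Sum>j\<in>J. d j powr p) powr (1/p)"
proof -
  define J' where "J' = {j\<in>J. 0 < d j}"
  have "finite J'" "J' \<subseteq> J"
    using assms(1) by (auto simp: J'_def)
  have sum_J': "(\<Sum>j\<in>J. d j) = (\<Sum>j\<in>J'. d j)" "(\<Sum>j\<in>J. d j powr p) = (\<Sum>j\<in>J'. d j powr p)"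
    unfolding J'_def using assms by (intro sum.mono_neutral_right; force)+
  show ?thesis
  proof (cases "J' = {}")
    case True
    then show ?thesis
      using sum_J' by simp
  next
    case False
    have "(\<Sum>j\<in>J'. d j) \<le> real (card J') powr (1 - 1/p) * (\<Sum>j\<in>J'. d j powr p) powr (1/p)"
      using sum_le_card_powr_mult_sum_powr_pos[OF \<open>finite J'\<close> False assms(2)] by (auto simp: J'_def)
    also have "\<dots> \<le> real (card J) powr (1 - 1/p) * (\<Sum>j\<in>J'. d j powr p) powr (1/p)"
      using False assms(1,2) \<open>finite J'\<close> \<open>J' \<subseteq> J\<close>
      by (intro mult_right_mono powr_mono2) (auto simp: card_mono card_gt_0_iff)
    finally show ?thesis
      using sum_J' by simp
  qed
qed

lemma upsilon_nonneg: "0 \<le> upsilon p n f"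
proof -
  have "nonoverlapping_subintervals n (\<lambda>_. 0) (\<lambda>_. 0)"
    by (simp add: nonoverlapping_subintervals_def)
  then show ?thesis
    unfolding upsilon_def by (intro SUP_upper2[of "(\<lambda>_. 0, \<lambda>_. 0)"]) auto
qed

lemma sum_norm_diff_le_upsilon:
  assumes "1 \<le> p" "nonoverlapping_subintervals n a b" "upsilon p n f \<le> ereal M"
  shows "(\<Sum>j<n. cmod (f (b j) - f (a j))) \<le> real n powr (1 - 1/p) * M"
proof -
  have "ereal ((\<Sum>j<n. cmod (f (b j) - f (a j)) powr p) powr (1/p)) \<le> upsilon p n f"
    unfolding upsilon_def using assms(2) by (intro SUP_upper2[of "(a, b)"]) auto
  then have "(\<Sum>j<n. cmod (f (b j) - f (a j)) powr p) powr (1/p) \<le> M"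
    using assms(3) by (metis ereal_less_eq(3) order_trans)
  have "(\<Sum>j<n. cmod (f (b j) - f (a j)))
          \<le> real n powr (1 - 1/p) * (\<Sum>j<n. cmod (f (b j) - f (a j)) powr p) powr (1/p)"
    using sum_le_card_powr_mult_sum_powr[of "{..<n}" p "\<lambda>j. cmod (f (b j) - f (a j))"] assms(1)
    by simp
  also have "\<dots> \<le> real n powr (1 - 1/p) * M"
    using \<open>(\<Sum>j<n. cmod (f (b j) - f (a j)) powr p) powr (1/p) \<le> M\<close> by (simp add: mult_left_mono)
  finally show ?thesis .
qed

lemma nonoverlapping_subintervals_alternate:
  assumes "0 \<le> t" "0 \<le> h" "t + (2 * real n - 1) * h \<le> 2 * pi"
  shows "nonoverlapping_subintervals n (\<lambda>j. t + real (2 * j) * h) (\<lambda>j. t + real (2 * j + 1) * h)"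
  unfolding nonoverlapping_subintervals_def
proof (intro conjI allI impI)
  fix j assume "j < n"
  then have "real (2 * j + 1) * h \<le> (2 * real n - 1) * h"
    using assms(2) by (intro mult_right_mono) auto
  then show "t + real (2 * j + 1) * h \<le> 2 * pi"
    using assms(3) by linarith
  show "0 \<le> t + real (2 * j) * h" "t + real (2 * j) * h \<le> t + real (2 * j + 1) * h"
    using assms(1,2) by (auto simp: algebra_simps)
next
  fix i j :: nat assume "i \<noteq> j"
  then have "real (2 * i + 1) * h \<le> real (2 * j) * h \<or> real (2 * j + 1) * h \<le> real (2 * i) * h"
    using assms(2) by (cases "i < j") (auto intro!: mult_right_mono)
  then show "t + real (2 * i + 1) * h \<le> t + real (2 * j) * h \<or> t + real (2 * j + 1) * h \<le> t + real (2 * i) * h"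
    by auto
qed

lemma sum_alternating_pairs:
  fixes F :: "nat \<Rightarrow> 'a::comm_ring_1"
  shows "(\<Sum>k<2 * n. (-1) ^ k * F k) = (\<Sum>j<n. F (2 * j) - F (2 * j + 1))"
  by (induction n) (auto simp: algebra_simps)

lemma exp_shift_half_period:
  assumes "1 \<le> n"
  shows "exp (- \<i> * of_nat n * complex_of_real (t + real k * (pi / real n)))
           = (-1) ^ k * exp (- \<i> * of_nat n * complex_of_real t)"
proof -
  have "real n * (real k * (pi / real n)) = real k * pi"
    using assms by simp
  then have half_period: "of_nat n * complex_of_real (real k * (pi / real n)) = of_nat k * pi"
    by (metis of_real_mult of_real_of_nat_eq)
  have "- \<i> * of_nat n * complex_of_real (t + real k * (pi / real n))
        = - \<i> * (of_nat n * complex_of_real (real k * (pi / real n))) + - \<i> * of_nat n * t"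
    by (simp add: algebra_simps)
  also have "\<dots> = of_nat k * (- (\<i> * pi)) + - \<i> * of_nat n * t"
    unfolding half_period by simp
  finally have "- \<i> * of_nat n * complex_of_real (t + real k * (pi / real n))
                = of_nat k * (- (\<i> * pi)) + - \<i> * of_nat n * t" .
  moreover have "exp (of_nat k * (- (\<i> * pi))) = (-1) ^ k"
    by (simp add: exp_of_nat_mult exp_minus power_inverse[symmetric])
  ultimately show ?thesis
    by (simp only: exp_add)
qed

lemma has_integral_sum_shifts:
  fixes g :: "real \<Rightarrow> 'a::banach"
  assumes "0 \<le> h" "g integrable_on {a..a + real m * h}"
  shows "((\<lambda>t. \<Sum>k<m. g (t + real k * h)) has_integral integral {a..a + real m * h} g) {a..a + h}"
  using assms(2)
proof (induction m)
  case 0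
  then show ?case by simp
next
  case (Suc m)
  let ?c = "a + real m * h"
  have end_eq: "a + real (Suc m) * h = ?c + h"
    by (simp add: algebra_simps)
  have "0 \<le> real m * h"
    using assms(1) by simp
  then have "{a..?c} \<subseteq> {a..?c + h}" "{?c..?c + h} \<subseteq> {a..?c + h}"
    using assms(1) by (subst atLeastatMost_subset_iff, linarith)+
  then have first: "g integrable_on {a..?c}" and last: "g integrable_on {?c..?c + h}"
    using integrable_subinterval_real[OF Suc.prems[unfolded end_eq]] by blast+
  have IH: "((\<lambda>t. \<Sum>k<m. g (t + real k * h)) has_integral integral {a..?c} g) {a..a + h}"
    using Suc.IH[OF first] .
  have "((\<lambda>t. g (t + real m * h)) has_integral integral {?c..?c + h} g) {a..a + h}"
    using has_integral_shift_real_ivl[OF integrable_integral[OF last], of "real m * h"] by simp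
  from has_integral_add[OF IH this]
  have "((\<lambda>t. \<Sum>k<Suc m. g (t + real k * h)) has_integral
          integral {a..?c} g + integral {?c..?c + h} g) {a..a + h}"
    by (simp add: add.commute)
  moreover have "integral {a..?c} g + integral {?c..?c + h} g = integral {a..a + real (Suc m) * h} g"
    using assms(1) Suc.prems \<open>0 \<le> real m * h\<close> unfolding end_eq
    by (intro Henstock_Kurzweil_Integration.integral_combine) auto
  ultimately show ?case by simp
qed

lemma norm_integral_le_norm_sum_shifts:
  fixes g :: "real \<Rightarrow> 'a::banach"
  assumes "0 \<le> h" "0 \<le> B"
    and "\<And>t. t \<in> {a..a + h} \<Longrightarrow> norm (\<Sum>k<m. g (t + real k * h)) \<le> B"
  shows "norm (integral {a..a + real m * h} g) \<le> B * h"
proof (cases "g integrable_on {a..a + real m * h}")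
  case True
  from has_integral_bound_real[OF assms(2) finite.emptyI has_integral_sum_shifts[OF assms(1) True]] assms(3)
  show ?thesis
    using assms(1) by simp
next
  case False
  then show ?thesis
    using assms(1,2) by (simp add: not_integrable_integral)
qed

lemma norm_fourier_coeff_le_norm_integral:
  "cmod (fourier_coeff f n)
     \<le> norm (integral {0..2 * pi} (\<lambda>x. f x * exp (- \<i> * of_int n * complex_of_real x))) / (2 * pi)"
proof (cases "set_integrable lborel {0..2 * pi} (\<lambda>x. f x * exp (- \<i> * of_int n * complex_of_real x))")
  case True
  then show ?thesis
    by (simp add: fourier_coeff_def set_borel_integral_eq_integral norm_mult norm_divide)
next
  case False
  then show ?thesis
    by (simp add: fourier_coeff_def set_lebesgue_integral_def set_integrable_def not_integrable_integral_eq)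
qed

lemma norm_sum_half_period_shifts_le_upsilon:
  assumes "1 \<le> p" "1 \<le> n" "upsilon p n f \<le> ereal M" "t \<in> {0..pi / real n}"
  shows "norm (\<Sum>k<2 * n. f (t + real k * (pi / real n))
                 * exp (- \<i> * of_nat n * complex_of_real (t + real k * (pi / real n))))
           \<le> real n powr (1 - 1/p) * M"
proof -
  define h where "h = pi / real n"
  define a where "a j = t + real (2 * j) * h" for j
  define b where "b j = t + real (2 * j + 1) * h" for j
  have "0 < h" "real n * h = pi"
    using assms(2) by (auto simp: h_def)
  have "(\<Sum>k<2 * n. f (t + real k * h) * exp (- \<i> * of_nat n * complex_of_real (t + real k * h)))
        = exp (- \<i> * of_nat n * complex_of_real t) * (\<Sum>k<2 * n. (-1) ^ k * f (t + real k * h))"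
    unfolding sum_distrib_left exp_shift_half_period[OF assms(2), folded h_def]
    by (simp add: algebra_simps)
  also have "\<dots> = exp (- \<i> * of_nat n * complex_of_real t) * (\<Sum>j<n. f (a j) - f (b j))"
    unfolding sum_alternating_pairs a_def b_def ..
  finally have "norm (\<Sum>k<2 * n. f (t + real k * h) * exp (- \<i> * of_nat n * complex_of_real (t + real k * h)))
             = norm (\<Sum>j<n. f (a j) - f (b j))"
    by (simp add: norm_mult)
  also have "\<dots> \<le> (\<Sum>j<n. cmod (f (b j) - f (a j)))"
    by (rule order_trans[OF norm_sum]) (simp add: norm_minus_commute)
  also have "\<dots> \<le> real n powr (1 - 1/p) * M"
  proof (rule sum_norm_diff_le_upsilon[OF assms(1) _ assms(3)])
    show "nonoverlapping_subintervals n a b"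
      unfolding a_def b_def
      using assms(4) \<open>0 < h\<close> \<open>real n * h = pi\<close>
      by (intro nonoverlapping_subintervals_alternate) (auto simp: h_def algebra_simps)
  qed
  finally show ?thesis
    by (simp add: h_def)
qed

lemma norm_fourier_coeff_le_upsilon:
  assumes "1 \<le> p" "1 \<le> n" "upsilon p n f \<le> ereal M"
  shows "cmod (fourier_coeff f (int n)) \<le> M / (2 * real n powr (1/p))"
proof -
  define h where "h = pi / real n"
  let ?g = "\<lambda>x. f x * exp (- \<i> * of_nat n * complex_of_real x)"
  have "0 < h" and period: "0 + real (2 * n) * h = 2 * pi"
    using assms(2) by (auto simp: h_def)
  have "0 \<le> M"
    using order_trans[OF upsilon_nonneg assms(3)] by simp
  then have "norm (integral {0..0 + real (2 * n) * h} ?g) \<le> real n powr (1 - 1/p) * M * h"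
    using \<open>0 < h\<close> norm_sum_half_period_shifts_le_upsilon[OF assms]
    by (intro norm_integral_le_norm_sum_shifts) (auto simp: h_def)
  then have integral_bound: "norm (integral {0..2 * pi} ?g) \<le> real n powr (1 - 1/p) * M * h"
    unfolding period .
  have "cmod (fourier_coeff f (int n)) \<le> norm (integral {0..2 * pi} ?g) / (2 * pi)"
    using norm_fourier_coeff_le_norm_integral[of f "int n"] by simp
  also have "\<dots> \<le> real n powr (1 - 1/p) * M * h / (2 * pi)"
    using integral_bound by (simp add: divide_right_mono)
  also have "\<dots> = M / (2 * real n powr (1/p))"
    using assms(2) by (simp add: h_def powr_diff field_simps)
  finally show ?thesis .
qed

theorem proposition7p6:
  fixes \<nu> :: "nat \<Rightarrow> real" and p :: real and f :: "real \<Rightarrow> complex"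
  assumes "modulus_of_variation \<nu>"
    and "1 \<le> p"
    and "f \<in> Vp_class p \<nu>"
    and "\<forall>x. f (x + 2 * pi) = f x"
  shows "\<exists>C. \<forall>n::nat. n \<ge> 1 \<longrightarrow>
           cmod (fourier_coeff f (int n)) \<le> C * \<nu> n / real n powr (1 / p)"
proof -
  obtain C where C: "\<And>n. 1 \<le> n \<Longrightarrow> upsilon p n f \<le> ereal (C * \<nu> n)"
    using assms(3) unfolding Vp_class_def by auto
  have "cmod (fourier_coeff f (int n)) \<le> C * \<nu> n / real n powr (1 / p)" if "1 \<le> n" for n
  proof -
    have "0 \<le> C * \<nu> n"
      using order_trans[OF upsilon_nonneg C[OF that]] by simp
    have "cmod (fourier_coeff f (int n)) \<le> C * \<nu> n / (2 * real n powr (1 / p))"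
      using norm_fourier_coeff_le_upsilon[OF assms(2) that C[OF that]] .
    also have "\<dots> \<le> C * \<nu> n / real n powr (1 / p)"
      using \<open>0 \<le> C * \<nu> n\<close> that by (intro divide_left_mono) auto
    finally show ?thesis .
  qed
  then show ?thesis
    by blast
qed

end
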